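(* Suppose Assumptions 1, 2 and 3 hold and $f$ is twice continuously differentiable. Let $\delta>0$ and $\beta\in(0,1)$, and let $C=C(\beta)$ be the smallest positive integer $C$ with $\frac C2\beta^C\le\frac{1}{1-\beta^2}\frac{1}{C+1}$ and $\beta^{C+1}\le\frac12$. Run \textsc{Signum} from $x_0$: at step $k\ge0$ draw a mini-batch stochastic gradient $\tilde g_k$ of size $n_k=k+1$ at $x_k$, form $$\tilde m_k=\frac{1-\beta}{1-\beta^{k+1}}\sum_{t=0}^k\beta^t\tilde g_{k-t},$$ and set $\delta_k=\delta/\sqrt{k+1}$ and $$x_{k+1}=\begin{cases}x_k-\delta_k\,\mathrm{sign}(\tilde g_k), & k<C \ \text{(warmup)},\\ x_k-\delta_k\,\mathrm{sign}(\tilde m_k), & k\ge C.\end{cases}$$ (Equivalently, with $m_0=0$ and $m_{k+1}=\beta m_k+(1-\beta)\tilde g_k$, $\mathrm{sign}(\tilde m_k)=\mathrm{sign}(m_{k+1})$.) Let $N=\sum_{k=0}^{K-1}n_k$ be the number of oracle calls up to step $K$, and $f_C:=\mathbb{E}[f(x_C)]$. Then there exist constants $A>0$ and $K_0$, depending only on $\beta$, such that for all $K\ge K_0$, $$\left(\mathbb{E}\Big[\frac{1}{K-C}\sum_{k=C}^{K-1}\|g_k\|_1\Big]\right)^2\le\frac{A}{\sqrt N}\left[\frac{f_C-f_*}{\delta}+(1+\log N)\Big(\frac{\delta\|\vec L\|_1}{1-\beta}+\|\vec\sigma\|_1\sqrt{1-\beta}\Big)\right]^2,$$ where $g_k=\nabla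 f(x_k)$.
   Context: $f:\mathbb{R}^d\to\mathbb{R}$ with gradient $g(x)=\nabla f(x)$. Assumption 1: there is a constant $f_*$ with $f(x)\ge f_*$ for all $x$. Assumption 2: there is a vector $\vec L=(L_1,\dots,L_d)$ of non-negative constants such that for all $x,y$, $\big|f(y)-f(x)-g(x)^T(y-x)\big|\le \frac12\sum_{i=1}^d L_i(y_i-x_i)^2$. Assumption 3: upon query $x$, a stochastic gradient oracle returns a random vector $\tilde g(x)$, independent of all other oracle calls, with $\mathbb{E}[\tilde g(x)]=g(x)$ and $\mathbb{E}[(\tilde g(x)_i-g(x)_i)^2]\le\sigma_i^2$ for a vector $\vec\sigma$ of non-negative constants. A mini-batch stochastic gradient of size $n$ at $x$ is the average of $n$ independent oracle calls at $x$. $\mathrm{sign}$ acts componentwise, with $\mathrm{sign}(0)=0$. *)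

theory Defs
  imports "HOL-Analysis.Analysis" "HOL-Probability.Probability"
begin

text \<open>Points of R^d are represented as functions nat => real vanishing at all
coordinates i >= d; nat => real carries the product topology (Function_Topology),
which on this subspace is the Euclidean topology.  This explicit carrier lets the
dimension d be quantified inside the statement, so the constants can be required
to depend on beta only.\<close>

definition supp_vec :: "nat \<Rightarrow> (nat \<Rightarrow> real) set" where
  "supp_vec d = {x. \<forall>i\<ge>d. x i = 0}"

definition l1norm :: "nat \<Rightarrow> (nat \<Rightarrow> real) \<Rightarrow> real" where
  "l1norm d x = (\<Sum>i<d. \<bar>x i\<bar>)"

definition has_grad :: "nat \<Rightarrow> ((nat \<Rightarrow> real) \<Rightarrow> real) \<Rightarrow> (nat \<Rightarrow> real) \<Rightarrow> (nat \<Rightarrow> real) \<Rightarrow> bool" where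
  "has_grad d F G x \<longleftrightarrow>
     ((\<lambda>h. (F (\<lambda>i. x i + h i) - F x - (\<Sum>i<d. G i * h i)) / l1norm d h) \<longlongrightarrow> 0)
       (at (\<lambda>_. 0) within supp_vec d)"

definition C2_with_grad :: "nat \<Rightarrow> ((nat \<Rightarrow> real) \<Rightarrow> real) \<Rightarrow> ((nat \<Rightarrow> real) \<Rightarrow> (nat \<Rightarrow> real)) \<Rightarrow> bool" where
  "C2_with_grad d f g \<longleftrightarrow>
     (\<forall>x\<in>supp_vec d. has_grad d f (g x) x) \<and>
     (\<exists>H :: (nat \<Rightarrow> real) \<Rightarrow> nat \<Rightarrow> nat \<Rightarrow> real.
        (\<forall>x\<in>supp_vec d. \<forall>i<d. has_grad d (\<lambda>y. g y i) (H x i) x) \<and>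
        (\<forall>i<d. \<forall>j<d. continuous_on (supp_vec d) (\<lambda>x. H x i j)))"

definition signum_C :: "real \<Rightarrow> nat" where
  "signum_C \<beta> = (LEAST C::nat. 0 < C \<and>
      real C / 2 * \<beta> ^ C \<le> 1 / (1 - \<beta>\<^sup>2) * (1 / (real C + 1)) \<and>
      \<beta> ^ (C + 1) \<le> 1 / 2)"

text \<open>Stochastic oracle model: an oracle call at x with noise u returns G x u.
The sample point omega assigns an independent noise omega (k,j) to the j-th oracle
call of step k.\<close>
definition minibatch :: "nat \<Rightarrow> ((nat \<Rightarrow> real) \<Rightarrow> real \<Rightarrow> (nat \<Rightarrow> real)) \<Rightarrow> nat
    \<Rightarrow> (nat \<Rightarrow> real) \<Rightarrow> (nat \<times> nat \<Rightarrow> real) \<Rightarrow> (nat \<Rightarrow> real)" where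
  "minibatch d G k x \<omega> =
     (\<lambda>i. if i < d then (\<Sum>j<k+1. G x (\<omega> (k, j)) i) / real (k + 1) else 0)"

text \<open>Signum state (x_k, m_k), with m_0 = 0, m_{k+1} = beta m_k + (1-beta) g~_k;
sign(m~_k) = sign(m_{k+1}).  Warmup uses sign(g~_k) for k < C.\<close>
fun signum_state :: "nat \<Rightarrow> real \<Rightarrow> real \<Rightarrow> nat \<Rightarrow> ((nat \<Rightarrow> real) \<Rightarrow> real \<Rightarrow> (nat \<Rightarrow> real))
    \<Rightarrow> (nat \<Rightarrow> real) \<Rightarrow> nat \<Rightarrow> (nat \<times> nat \<Rightarrow> real) \<Rightarrow> (nat \<Rightarrow> real) \<times> (nat \<Rightarrow> real)" where
  "signum_state d \<beta> \<delta> C G x0 0 \<omega> = (x0, (\<lambda>_. 0))"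
| "signum_state d \<beta> \<delta> C G x0 (Suc k) \<omega> =
     (let xm = signum_state d \<beta> \<delta> C G x0 k \<omega>;
          x = fst xm; m = snd xm;
          gt = minibatch d G k x \<omega>;
          m' = (\<lambda>i. \<beta> * m i + (1 - \<beta>) * gt i);
          dk = \<delta> / sqrt (real (k + 1));
          dir = (if k < C then gt else m')
      in ((\<lambda>i. x i - dk * (if i < d then sgn (dir i) else 0)), m'))"

definition signum_x :: "nat \<Rightarrow> real \<Rightarrow> real \<Rightarrow> ((nat \<Rightarrow> real) \<Rightarrow> real \<Rightarrow> (nat \<Rightarrow> real))
    \<Rightarrow> (nat \<Rightarrow> real) \<Rightarrow> nat \<Rightarrow> (nat \<times> nat \<Rightarrow> real) \<Rightarrow> (nat \<Rightarrow> real)" where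
  "signum_x d \<beta> \<delta> G x0 k \<omega> = fst (signum_state d \<beta> \<delta> (signum_C \<beta>) G x0 k \<omega>)"

end

theory Submission
  imports Defs
begin

text \<open>Past the warm-up the Signum step moves along the sign of the momentum m, and for every
  coordinate and every c > 0 one has g sgn m \<ge> |g| - 2 |g - c m|. For a suitable c the vector c m is
  a \<beta>-weighted average of past minibatch gradients, so |g_k - c m| splits into the drift of the true
  gradient along the trajectory, controlled by smoothness and the step sizes, and the minibatch noise,
  whose expected size at step j is at most \<sigma>/\<surd>(j+1) because the j-th batch is independent of the
  current iterate. With \<delta>_k = \<delta>/\<surd>(k+1) both errors in the descent inequality are O(1/(k+1)), so
  summing it from C to K telescopes to \<Sum> \<delta>_k E|g_k|_1 \<le> f_C - f_* + O(log K); dividing by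
  \<delta>_K \<ge> \<delta>/\<surd>K and using K \<ge> 2C+1 and \<surd>N \<le> K gives the rate.\<close>

lemma abs_le_mult_sgn:
  fixes a m c :: real
  assumes "0 < c"
  shows "\<bar>a\<bar> - 2 * \<bar>a - c * m\<bar> \<le> a * sgn m"
proof -
  consider "m > 0" | "m = 0" | "m < 0" by linarith
  then show ?thesis
  proof cases
    case 1
    then have "c * m > 0" using assms by simp
    then show ?thesis using 1 by (auto simp: abs_if sgn_if)
  next
    case 2
    then show ?thesis by simp
  next
    case 3
    then have "c * m < 0" using assms by (simp add: mult_pos_neg)
    then show ?thesis using 3 by (auto simp: abs_if sgn_if)
  qed
qed

lemma inverse_sqrt_mult_le:
  fixes k t :: nat
  assumes "t \<le> k"
  shows "1 / (sqrt (real k + 1) * sqrt (real (k - t) + 1)) \<le> (real t + 1) / (real k + 1)"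
proof -
  have diff: "real (k - t) = real k - real t" using assms by simp
  have "real k + 1 \<le> (real t + 1) * (real k - real t + 1)"
    using assms by (simp add: algebra_simps) (metis mult_right_mono of_nat_0_le_iff of_nat_mono)
  also have "\<dots> \<le> (real t + 1)\<^sup>2 * (real k - real t + 1)"
    using assms by (simp add: power2_eq_square mult_right_mono)
  finally have "(real k + 1)\<^sup>2 \<le> (real t + 1)\<^sup>2 * ((real k + 1) * (real (k - t) + 1))"
    unfolding diff by (simp add: power2_eq_square mult_left_mono)
  then have "sqrt ((real k + 1)\<^sup>2) \<le> sqrt ((real t + 1)\<^sup>2 * ((real k + 1) * (real (k - t) + 1)))"
    by (rule real_sqrt_le_mono)
  then have "real k + 1 \<le> (real t + 1) * (sqrt (real k + 1) * sqrt (real (k - t) + 1))"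
    by (simp add: real_sqrt_mult)
  then show ?thesis by (simp add: field_simps)
qed

lemma harm_le_one_plus_ln:
  assumes "1 \<le> n"
  shows "harm n \<le> 1 + ln (real n)"
  using assms
proof (induction n rule: nat_induct_at_least)
  case base
  then show ?case by (simp add: harm_def)
next
  case (Suc n)
  have n: "1 \<le> real n" using Suc by simp
  have "ln (real n / (real n + 1)) \<le> real n / (real n + 1) - 1"
    using n by (intro ln_le_minus_one) auto
  also have "\<dots> = - inverse (real (Suc n))" using n by (simp add: field_simps)
  finally have "inverse (real (Suc n)) \<le> ln (1 + real n) - ln (real n)"
    using n by (simp add: ln_div add.commute)
  then show ?case using Suc by (simp add: harm_Suc)
qed

lemma sum_inverse_le_harm: "(\<Sum>k\<in>{m..<n}. 1 / (real k + 1)) \<le> harm n"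
proof -
  have "(\<Sum>k\<in>{m..<n}. 1 / (real k + 1)) = (\<Sum>k\<in>{m..<n}. inverse (real (Suc k)))"
    by (simp add: inverse_eq_divide add.commute)
  also have "\<dots> \<le> harm n"
    unfolding harm_altdef by (intro sum_mono2) auto
  finally show ?thesis .
qed

lemma sum_Suc_bounds:
  shows "real K \<le> real (\<Sum>k<K. k + 1)" and "sqrt (real (\<Sum>k<K. k + 1)) \<le> real K"
proof -
  have "K \<le> (\<Sum>k<K. k + 1)"
    using sum_mono[of "{..<K}" "\<lambda>_. 1::nat" "\<lambda>k. k + 1"] by simp
  then show "real K \<le> real (\<Sum>k<K. k + 1)" by (rule of_nat_mono)
  have "(\<Sum>k<K. k + 1) \<le> K * K"
    using sum_mono[of "{..<K}" "\<lambda>k. k + 1" "\<lambda>_. K"] by simp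
  then have "real (\<Sum>k<K. k + 1) \<le> real K * real K"
    by (simp only: of_nat_mono flip: of_nat_mult)
  then have "sqrt (real (\<Sum>k<K. k + 1)) \<le> sqrt (real K * real K)"
    by (rule real_sqrt_le_mono)
  then show "sqrt (real (\<Sum>k<K. k + 1)) \<le> real K" by simp
qed

lemma square_of_average_le:
  fixes S R n :: real and C K :: nat
  assumes S: "0 \<le> S" "S \<le> sqrt (real K) * R" and K: "2 * C + 1 \<le> K"
    and n: "1 \<le> n" "sqrt n \<le> real K"
  shows "(S / (real K - real C))\<^sup>2 \<le> 4 / sqrt n * R\<^sup>2"
proof -
  have K_pos: "0 < real K" and half: "real K / 2 \<le> real K - real C" using K by auto
  have "S / (real K - real C) \<le> sqrt (real K) * R / (real K / 2)"
    using S half K_pos by (intro frac_le) auto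
  also have "\<dots> = 2 * R / sqrt (real K)"
  proof -
    have "real K = sqrt (real K) * sqrt (real K)" by simp
    then show ?thesis using K_pos by (simp add: divide_simps)
  qed
  finally have "(S / (real K - real C))\<^sup>2 \<le> (2 * R / sqrt (real K))\<^sup>2"
    using S half K_pos by (intro power_mono) auto
  also have "\<dots> = 4 / real K * R\<^sup>2" using K_pos by (simp add: power_divide power_mult_distrib)
  also have "\<dots> \<le> 4 / sqrt n * R\<^sup>2" using n K_pos by (intro mult_right_mono divide_left_mono) auto
  finally show ?thesis .
qed

definition lag_weight :: "real \<Rightarrow> real" where
  "lag_weight \<beta> = (\<Sum>t. \<beta>^t * (real t + 1)\<^sup>2)"

lemma summable_lag_weight:
  fixes \<beta> :: real
  assumes "0 \<le> \<beta>" "\<beta> < 1"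
  shows "summable (\<lambda>t. \<beta>^t * (real t + 1)\<^sup>2)"
proof -
  define c where "c = (1 + \<beta>) / 2"
  have "(\<lambda>n. \<beta> * ((real n + 2) / (real n + 1))\<^sup>2) \<longlonglongrightarrow> \<beta> * 1\<^sup>2"
    by (intro tendsto_intros) real_asymp
  moreover have "\<beta> * 1\<^sup>2 < c" using assms by (simp add: c_def)
  ultimately have "eventually (\<lambda>n. \<beta> * ((real n + 2) / (real n + 1))\<^sup>2 < c) sequentially"
    by (rule order_tendstoD)
  then obtain N where N: "\<And>n. n \<ge> N \<Longrightarrow> \<beta> * ((real n + 2) / (real n + 1))\<^sup>2 < c"
    by (auto simp: eventually_sequentially)
  show ?thesis
  proof (rule summable_ratio_test)
    show "c < 1" using assms by (simp add: c_def)
    fix n assume "n \<ge> N"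
    have "((real n + 2) / (real n + 1))\<^sup>2 * (real n + 1)\<^sup>2 = (real n + 2)\<^sup>2"
      by (simp add: power_divide)
    then have "\<beta>^Suc n * (real (Suc n) + 1)\<^sup>2
        = (\<beta> * ((real n + 2) / (real n + 1))\<^sup>2) * (\<beta>^n * (real n + 1)\<^sup>2)"
      by (simp add: algebra_simps)
    also have "\<dots> \<le> c * (\<beta>^n * (real n + 1)\<^sup>2)"
      using N[OF \<open>n \<ge> N\<close>] assms by (intro mult_right_mono) auto
    finally show "norm (\<beta>^Suc n * (real (Suc n) + 1)\<^sup>2) \<le> c * norm (\<beta>^n * (real n + 1)\<^sup>2)"
      using assms by simp
  qed
qed

lemma sum_le_lag_weight:
  fixes \<beta> :: real
  assumes "0 \<le> \<beta>" "\<beta> < 1"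
  shows "(\<Sum>t\<le>k. \<beta>^t * (real t + 1)\<^sup>2) \<le> lag_weight \<beta>"
  unfolding lag_weight_def atMost_atLeast0 lessThan_Suc_atMost[symmetric]
  using summable_lag_weight[OF assms] assms by (intro sum_le_suminf) auto

lemma lag_weight_nonneg: "0 \<le> \<beta> \<Longrightarrow> \<beta> < 1 \<Longrightarrow> 0 \<le> lag_weight \<beta>"
  using sum_le_lag_weight[of \<beta> 0] by simp

section \<open>Gradient differences under two-sided smoothness\<close>

lemma weighted_sum_squares_le:
  fixes L v :: "nat \<Rightarrow> real"
  assumes "\<forall>i<d. 0 \<le> L i" and "\<And>i. i < d \<Longrightarrow> \<bar>v i\<bar> \<le> b"
  shows "(\<Sum>i<d. L i * (v i)\<^sup>2) \<le> (\<Sum>i<d. L i) * b\<^sup>2"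
proof -
  have "(\<Sum>i<d. L i * (v i)\<^sup>2) \<le> (\<Sum>i<d. L i * b\<^sup>2)"
  proof (intro sum_mono mult_left_mono)
    fix i assume "i \<in> {..<d}"
    then have "\<bar>v i\<bar> \<le> b" using assms(2) by simp
    then show "(v i)\<^sup>2 \<le> b\<^sup>2" by (metis abs_ge_zero power2_abs power_mono)
    show "0 \<le> L i" using assms(1) \<open>i \<in> {..<d}\<close> by simp
  qed
  then show ?thesis by (simp add: sum_distrib_right)
qed

lemma grad_l1_lipschitz:
  fixes f :: "(nat \<Rightarrow> real) \<Rightarrow> real" and g :: "(nat \<Rightarrow> real) \<Rightarrow> nat \<Rightarrow> real"
  assumes smooth: "\<forall>x\<in>supp_vec d. \<forall>y\<in>supp_vec d.
        \<bar>f y - f x - (\<Sum>i<d. g x i * (y i - x i))\<bar> \<le> 1 / 2 * (\<Sum>i<d. L i * (y i - x i)\<^sup>2)"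
    and L: "\<forall>i<d. 0 \<le> L i" and x: "x \<in> supp_vec d" and y: "y \<in> supp_vec d"
    and r: "\<forall>i<d. \<bar>y i - x i\<bar> \<le> r"
  shows "(\<Sum>i<d. \<bar>g y i - g x i\<bar>) \<le> 3 * (\<Sum>i<d. L i) * r"
proof (cases "r > 0")
  case False
  have "y = x"
  proof
    fix i
    show "y i = x i"
    proof (cases "i < d")
      case True
      then have "\<bar>y i - x i\<bar> \<le> r" using r by simp
      then show ?thesis using False by linarith
    qed (use x y in \<open>auto simp: supp_vec_def\<close>)
  qed
  moreover have "r = 0 \<or> d = 0"
  proof (cases "d = 0")
    case False
    then have "\<bar>y 0 - x 0\<bar> \<le> r" using r by simp
    then show ?thesis using \<open>\<not> r > 0\<close> by linarith
  qed simp
  ultimately show ?thesis by auto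
next
  case True
  text \<open>Test the three smoothness inequalities at the point z = y + r sgn(g y - g x).\<close>
  define z where "z i = y i + (if i < d then r * sgn (g y i - g x i) else 0)" for i
  have z: "z \<in> supp_vec d" using y by (auto simp: supp_vec_def z_def)
  have zy: "\<bar>z i - y i\<bar> \<le> r" and zx: "i < d \<Longrightarrow> \<bar>z i - x i\<bar> \<le> 2 * r" for i
    using True r by (auto simp: z_def abs_mult sgn_if)
  have lin: "(\<Sum>i<d. g y i * (z i - y i)) - (\<Sum>i<d. g x i * (z i - x i)) + (\<Sum>i<d. g x i * (y i - x i))
      = r * (\<Sum>i<d. \<bar>g y i - g x i\<bar>)"
  proof -
    have "(\<Sum>i<d. g y i * (z i - y i)) - (\<Sum>i<d. g x i * (z i - x i)) + (\<Sum>i<d. g x i * (y i - x i))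
        = (\<Sum>i<d. g y i * (z i - y i) - g x i * (z i - x i) + g x i * (y i - x i))"
      by (simp add: sum_subtractf sum.distrib)
    also have "\<dots> = (\<Sum>i<d. r * \<bar>g y i - g x i\<bar>)"
      by (intro sum.cong refl) (simp add: z_def algebra_simps abs_if sgn_if)
    finally show ?thesis by (simp add: sum_distrib_left)
  qed
  have "r * (\<Sum>i<d. \<bar>g y i - g x i\<bar>)
      \<le> 1/2 * (\<Sum>i<d. L i * (z i - x i)\<^sup>2) + 1/2 * (\<Sum>i<d. L i * (z i - y i)\<^sup>2)
         + 1/2 * (\<Sum>i<d. L i * (y i - x i)\<^sup>2)"
    using abs_le_D1[OF smooth[rule_format, OF x z]] abs_le_D2[OF smooth[rule_format, OF y z]]
      abs_le_D2[OF smooth[rule_format, OF x y]]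
    unfolding lin[symmetric] by linarith
  also have "\<dots> \<le> 1/2 * ((\<Sum>i<d. L i) * (2 * r)\<^sup>2) + 1/2 * ((\<Sum>i<d. L i) * (1 * r)\<^sup>2)
         + 1/2 * ((\<Sum>i<d. L i) * (1 * r)\<^sup>2)"
    using zx zy r by (intro add_mono mult_left_mono weighted_sum_squares_le[OF L]) auto
  also have "\<dots> = r * (3 * (\<Sum>i<d. L i) * r)" by (simp add: power2_eq_square algebra_simps)
  finally show ?thesis using True by simp
qed

section \<open>Independent coordinates of a product probability space\<close>

lemma indep_vars_PiM_components:
  assumes "prob_space N"
  shows "prob_space.indep_vars (PiM UNIV (\<lambda>_::'i. N)) (\<lambda>_. N) (\<lambda>i \<omega>. \<omega> i) UNIV"
proof -
  interpret prob_space "PiM UNIV (\<lambda>_::'i. N)" by (intro prob_space_PiM assms)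
  have component_distr: "distr (PiM UNIV (\<lambda>_::'i. N)) N (\<lambda>\<omega>. \<omega> i) = N" for i
    by (intro distr_PiM_component assms) simp
  have restrict_UNIV: "(\<lambda>x. restrict x UNIV) = (\<lambda>x. x)" by (simp add: fun_eq_iff)
  show ?thesis
  proof (subst indep_vars_iff_distr_eq_PiM)
    show "random_variable N (\<lambda>\<omega>. \<omega> i)" for i by (rule measurable_component_singleton) simp
    show "distr (PiM UNIV (\<lambda>_::'i. N)) (PiM UNIV (\<lambda>_. N)) (\<lambda>x. \<lambda>i\<in>UNIV. x i)
        = PiM UNIV (\<lambda>i. distr (PiM UNIV (\<lambda>_::'i. N)) N (\<lambda>\<omega>. \<omega> i))"
      unfolding component_distr restrict_UNIV by simp
  qed simp
qed

lemma indep_var_PiM_restrict: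
  assumes N: "prob_space N" and AB: "A \<inter> B = {}"
    and \<phi>: "\<phi> \<in> borel_measurable (PiM A (\<lambda>_. N))" and \<psi>: "\<psi> \<in> borel_measurable (PiM B (\<lambda>_. N))"
  shows "prob_space.indep_var (PiM UNIV (\<lambda>_::'i. N))
      borel (\<lambda>\<omega>. \<phi> (restrict \<omega> A)) borel (\<lambda>\<omega>. \<psi> (restrict \<omega> B))"
proof -
  interpret prob_space "PiM UNIV (\<lambda>_::'i. N)" by (intro prob_space_PiM N)
  have "indep_var (PiM A (\<lambda>_. N)) (\<lambda>\<omega>. restrict (\<lambda>i. \<omega> i) A) (PiM B (\<lambda>_. N)) (\<lambda>\<omega>. restrict (\<lambda>i. \<omega> i) B)"
    using AB by (intro indep_var_restrict[OF indep_vars_PiM_components[OF N]]) auto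
  from indep_var_compose[OF this \<phi> \<psi>] show ?thesis by (simp add: comp_def)
qed

lemma
  fixes h :: "'a \<Rightarrow> real"
  assumes N: "prob_space N" and h: "h \<in> borel_measurable N" "integrable N h"
  shows integrable_PiM_component: "integrable (PiM UNIV (\<lambda>_::'i. N)) (\<lambda>\<omega>. h (\<omega> p))"
    and integral_PiM_component: "(\<integral>\<omega>. h (\<omega> p) \<partial>PiM UNIV (\<lambda>_::'i. N)) = (\<integral>u. h u \<partial>N)"
proof -
  have comp: "(\<lambda>\<omega>. \<omega> p) \<in> measurable (PiM UNIV (\<lambda>_::'i. N)) N"
    by (rule measurable_component_singleton) simp
  have distr: "distr (PiM UNIV (\<lambda>_::'i. N)) N (\<lambda>\<omega>. \<omega> p) = N"
    by (intro distr_PiM_component N) simp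
  show "integrable (PiM UNIV (\<lambda>_::'i. N)) (\<lambda>\<omega>. h (\<omega> p))"
    using integrable_distr_eq[OF comp h(1)] h(2) by (simp add: distr)
  show "(\<integral>\<omega>. h (\<omega> p) \<partial>PiM UNIV (\<lambda>_::'i. N)) = (\<integral>u. h u \<partial>N)"
    using integral_distr[OF comp h(1)] by (simp add: distr)
qed

lemma
  fixes h :: "'a \<Rightarrow> real" and p q :: 'i
  assumes N: "prob_space N" and h: "h \<in> borel_measurable N" "integrable N (\<lambda>u. (h u)\<^sup>2)"
    and mean_zero: "(\<integral>u. h u \<partial>N) = 0"
  shows integrable_PiM_components_mult: "integrable (PiM UNIV (\<lambda>_::'i. N)) (\<lambda>\<omega>. h (\<omega> p) * h (\<omega> q))"
    and integral_PiM_components_mult: "(\<integral>\<omega>. h (\<omega> p) * h (\<omega> q) \<partial>PiM UNIV (\<lambda>_::'i. N))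
      = (if p = q then (\<integral>u. (h u)\<^sup>2 \<partial>N) else 0)"
proof -
  interpret N: prob_space N by (rule N)
  interpret P: prob_space "PiM UNIV (\<lambda>_::'i. N)" by (intro prob_space_PiM N)
  have h_int: "integrable N h" using N.square_integrable_imp_integrable[OF h] .
  have "integrable (PiM UNIV (\<lambda>_::'i. N)) (\<lambda>\<omega>. h (\<omega> p) * h (\<omega> q)) \<and>
      (\<integral>\<omega>. h (\<omega> p) * h (\<omega> q) \<partial>PiM UNIV (\<lambda>_::'i. N)) = (if p = q then (\<integral>u. (h u)\<^sup>2 \<partial>N) else 0)"
  proof (cases "p = q")
    case True
    then show ?thesis
      using integrable_PiM_component[OF N _ h(2), of p] integral_PiM_component[OF N _ h(2), of p] h(1)
      by (simp add: power2_eq_square)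
  next
    case False
    have "P.indep_var borel (\<lambda>\<omega>. (\<lambda>\<eta>. h (\<eta> p)) (restrict \<omega> {p})) borel (\<lambda>\<omega>. (\<lambda>\<eta>. h (\<eta> q)) (restrict \<omega> {q}))"
      using False h(1) by (intro indep_var_PiM_restrict N) auto
    then have ind: "P.indep_var borel (\<lambda>\<omega>. h (\<omega> p)) borel (\<lambda>\<omega>. h (\<omega> q))" by simp
    have int: "integrable (PiM UNIV (\<lambda>_::'i. N)) (\<lambda>\<omega>. h (\<omega> r))" for r
      by (rule integrable_PiM_component[OF N h(1) h_int])
    have "(\<integral>\<omega>. h (\<omega> p) \<partial>PiM UNIV (\<lambda>_::'i. N)) = 0"
      using integral_PiM_component[OF N h(1) h_int] mean_zero by simp
    then show ?thesis
      using P.indep_var_integrable[OF ind int int] P.indep_var_lebesgue_integral[OF ind int int] False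
      by simp
  qed
  then show "integrable (PiM UNIV (\<lambda>_::'i. N)) (\<lambda>\<omega>. h (\<omega> p) * h (\<omega> q))"
    and "(\<integral>\<omega>. h (\<omega> p) * h (\<omega> q) \<partial>PiM UNIV (\<lambda>_::'i. N)) = (if p = q then (\<integral>u. (h u)\<^sup>2 \<partial>N) else 0)"
    by auto
qed

lemma
  fixes h :: "'a \<Rightarrow> real" and s :: "nat \<Rightarrow> 'i"
  assumes N: "prob_space N" and h: "h \<in> borel_measurable N" "integrable N (\<lambda>u. (h u)\<^sup>2)"
    and mean_zero: "(\<integral>u. h u \<partial>N) = 0" and s: "inj_on s {..<n}" and n: "0 < n"
  shows integrable_sample_mean_square:
      "integrable (PiM UNIV (\<lambda>_::'i. N)) (\<lambda>\<omega>. ((\<Sum>l<n. h (\<omega> (s l))) / real n)\<^sup>2)"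
    and integral_sample_mean_square:
      "(\<integral>\<omega>. ((\<Sum>l<n. h (\<omega> (s l))) / real n)\<^sup>2 \<partial>PiM UNIV (\<lambda>_::'i. N)) = (\<integral>u. (h u)\<^sup>2 \<partial>N) / real n"
proof -
  have expand: "((\<Sum>l<n. h (\<omega> (s l))) / real n)\<^sup>2
      = (\<Sum>l<n. \<Sum>l'<n. h (\<omega> (s l)) * h (\<omega> (s l'))) / (real n)\<^sup>2" for \<omega> :: "'i \<Rightarrow> 'a"
    by (simp add: power_divide power2_eq_square sum_product)
  note int = integrable_PiM_components_mult[OF N h mean_zero]
  show "integrable (PiM UNIV (\<lambda>_::'i. N)) (\<lambda>\<omega>. ((\<Sum>l<n. h (\<omega> (s l))) / real n)\<^sup>2)"
    unfolding expand by (intro integrable_divide Bochner_Integration.integrable_sum int)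
  have diag: "(\<Sum>l'<n. if s l = s l' then c else 0) = c" if "l < n" for l and c :: real
  proof -
    have "(\<Sum>l'<n. if s l = s l' then c else 0) = (\<Sum>l'<n. if l = l' then c else 0)"
      using s that by (intro sum.cong refl) (auto dest: inj_onD)
    then show ?thesis using that by simp
  qed
  have "(\<integral>\<omega>. ((\<Sum>l<n. h (\<omega> (s l))) / real n)\<^sup>2 \<partial>PiM UNIV (\<lambda>_::'i. N))
      = (\<Sum>l<n. \<Sum>l'<n. (\<integral>\<omega>. h (\<omega> (s l)) * h (\<omega> (s l')) \<partial>PiM UNIV (\<lambda>_::'i. N))) / (real n)\<^sup>2"
  proof -
    have "(\<integral>\<omega>. (\<Sum>l<n. \<Sum>l'<n. h (\<omega> (s l)) * h (\<omega> (s l'))) \<partial>PiM UNIV (\<lambda>_::'i. N))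
        = (\<Sum>l<n. (\<integral>\<omega>. (\<Sum>l'<n. h (\<omega> (s l)) * h (\<omega> (s l'))) \<partial>PiM UNIV (\<lambda>_::'i. N)))"
      by (intro Bochner_Integration.integral_sum Bochner_Integration.integrable_sum int)
    also have "\<dots> = (\<Sum>l<n. \<Sum>l'<n. (\<integral>\<omega>. h (\<omega> (s l)) * h (\<omega> (s l')) \<partial>PiM UNIV (\<lambda>_::'i. N)))"
      by (intro sum.cong refl Bochner_Integration.integral_sum int)
    finally show ?thesis unfolding expand by simp
  qed
  also have "\<dots> = real n * (\<integral>u. (h u)\<^sup>2 \<partial>N) / (real n)\<^sup>2"
    by (simp add: integral_PiM_components_mult[OF N h mean_zero] diag)
  also have "\<dots> = (\<integral>u. (h u)\<^sup>2 \<partial>N) / real n"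
    using n by (simp add: power2_eq_square)
  finally show "(\<integral>\<omega>. ((\<Sum>l<n. h (\<omega> (s l))) / real n)\<^sup>2 \<partial>PiM UNIV (\<lambda>_::'i. N)) = (\<integral>u. (h u)\<^sup>2 \<partial>N) / real n" .
qed

lemma (in prob_space) expectation_abs_le_sqrt_second_moment:
  fixes Y :: "'a \<Rightarrow> real"
  assumes Y: "Y \<in> borel_measurable M" "integrable M (\<lambda>x. (Y x)\<^sup>2)"
  shows "integrable M (\<lambda>x. \<bar>Y x\<bar>)"
    and "expectation (\<lambda>x. \<bar>Y x\<bar>) \<le> sqrt (expectation (\<lambda>x. (Y x)\<^sup>2))"
proof -
  show int: "integrable M (\<lambda>x. \<bar>Y x\<bar>)"
    using square_integrable_imp_integrable[OF Y] by (rule integrable_abs)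
  have "(expectation (\<lambda>x. \<bar>Y x\<bar>))\<^sup>2 \<le> expectation (\<lambda>x. (Y x)\<^sup>2)"
    using variance_eq[of "\<lambda>x. \<bar>Y x\<bar>"] variance_positive[of "\<lambda>x. \<bar>Y x\<bar>"] int Y(2) by simp
  then show "expectation (\<lambda>x. \<bar>Y x\<bar>) \<le> sqrt (expectation (\<lambda>x. (Y x)\<^sup>2))"
    by (simp add: real_le_rsqrt)
qed

section \<open>The Signum trajectory\<close>

locale signum_path =
  fixes d :: nat and f :: "(nat \<Rightarrow> real) \<Rightarrow> real" and g :: "(nat \<Rightarrow> real) \<Rightarrow> nat \<Rightarrow> real"
    and L :: "nat \<Rightarrow> real" and G :: "(nat \<Rightarrow> real) \<Rightarrow> real \<Rightarrow> nat \<Rightarrow> real"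
    and \<beta> \<delta> :: real and C :: nat and x0 :: "nat \<Rightarrow> real"
  assumes beta_pos: "0 < \<beta>" and beta_less_one: "\<beta> < 1"
    and L_nonneg: "\<forall>i<d. 0 \<le> L i"
    and smooth: "\<forall>x\<in>supp_vec d. \<forall>y\<in>supp_vec d.
        \<bar>f y - f x - (\<Sum>i<d. g x i * (y i - x i))\<bar> \<le> 1 / 2 * (\<Sum>i<d. L i * (y i - x i)\<^sup>2)"
    and delta_pos: "0 < \<delta>" and x0_in: "x0 \<in> supp_vec d"
begin

definition X :: "nat \<Rightarrow> (nat \<times> nat \<Rightarrow> real) \<Rightarrow> nat \<Rightarrow> real" where
  "X k \<omega> = fst (signum_state d \<beta> \<delta> C G x0 k \<omega>)"

definition mom :: "nat \<Rightarrow> (nat \<times> nat \<Rightarrow> real) \<Rightarrow> nat \<Rightarrow> real" where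
  "mom k \<omega> = snd (signum_state d \<beta> \<delta> C G x0 k \<omega>)"

definition grad_est :: "nat \<Rightarrow> (nat \<times> nat \<Rightarrow> real) \<Rightarrow> nat \<Rightarrow> real" where
  "grad_est k \<omega> = minibatch d G k (X k \<omega>) \<omega>"

definition dir :: "nat \<Rightarrow> (nat \<times> nat \<Rightarrow> real) \<Rightarrow> nat \<Rightarrow> real" where
  "dir k \<omega> i = (if k < C then grad_est k \<omega> i else \<beta> * mom k \<omega> i + (1 - \<beta>) * grad_est k \<omega> i)"

definition stepsize :: "nat \<Rightarrow> real" where
  "stepsize k = \<delta> / sqrt (real (k + 1))"

definition noise :: "nat \<Rightarrow> (nat \<times> nat \<Rightarrow> real) \<Rightarrow> nat \<Rightarrow> real" where
  "noise k \<omega> i = grad_est k \<omega> i - g (X k \<omega>) i"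

abbreviation Ltot :: real where
  "Ltot \<equiv> \<Sum>i<d. L i"

lemma X_0: "X 0 \<omega> = x0" and mom_0: "mom 0 \<omega> = (\<lambda>_. 0)"
  by (simp_all add: X_def mom_def)

lemma X_Suc: "X (Suc k) \<omega> = (\<lambda>i. X k \<omega> i - stepsize k * (if i < d then sgn (dir k \<omega> i) else 0))"
  by (simp add: X_def mom_def grad_est_def dir_def stepsize_def Let_def fun_eq_iff)

lemma mom_Suc: "mom (Suc k) \<omega> = (\<lambda>i. \<beta> * mom k \<omega> i + (1 - \<beta>) * grad_est k \<omega> i)"
  by (simp add: X_def mom_def grad_est_def Let_def)

lemma stepsize_nonneg: "0 \<le> stepsize k"
  using delta_pos by (simp add: stepsize_def)

lemma Ltot_nonneg: "0 \<le> Ltot"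
  using L_nonneg by (intro sum_nonneg) auto

lemma X_in_supp_vec: "X k \<omega> \<in> supp_vec d"
  using x0_in by (induction k) (auto simp: X_0 X_Suc supp_vec_def)

lemma mom_Suc_eq_sum: "mom (Suc k) \<omega> i = (1 - \<beta>) * (\<Sum>t\<le>k. \<beta>^t * grad_est (k - t) \<omega> i)"
proof (induction k)
  case 0
  then show ?case by (simp add: mom_Suc mom_0)
next
  case (Suc k)
  have "mom (Suc (Suc k)) \<omega> i
      = \<beta> * ((1 - \<beta>) * (\<Sum>t\<le>k. \<beta>^t * grad_est (k - t) \<omega> i)) + (1 - \<beta>) * grad_est (Suc k) \<omega> i"
    using Suc by (simp add: mom_Suc)
  also have "\<dots> = (1 - \<beta>) * (grad_est (Suc k) \<omega> i + (\<Sum>t\<le>k. \<beta>^Suc t * grad_est (k - t) \<omega> i))"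
    by (simp add: sum_distrib_left algebra_simps)
  also have "\<dots> = (1 - \<beta>) * (\<Sum>t\<le>Suc k. \<beta>^t * grad_est (Suc k - t) \<omega> i)"
    by (subst sum.atMost_Suc_shift) simp
  finally show ?case .
qed

lemma abs_X_diff_le: "m \<le> k \<Longrightarrow> \<bar>X k \<omega> i - X m \<omega> i\<bar> \<le> (\<Sum>s\<in>{m..<k}. stepsize s)"
proof (induction k rule: dec_induct)
  case base
  then show ?case by simp
next
  case (step k)
  have "\<bar>stepsize k * (if i < d then sgn (dir k \<omega> i) else 0)\<bar> \<le> stepsize k"
    using stepsize_nonneg[of k] by (auto simp: abs_mult sgn_if)
  then have "\<bar>X (Suc k) \<omega> i - X m \<omega> i\<bar> \<le> \<bar>X k \<omega> i - X m \<omega> i\<bar> + stepsize k"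
    by (simp add: X_Suc)
  then show ?case using step by (simp add: sum.atLeastLessThan_Suc)
qed

lemma grad_drift_le:
  assumes "t \<le> k"
  shows "(\<Sum>i<d. \<bar>g (X k \<omega>) i - g (X (k - t) \<omega>) i\<bar>) \<le> 3 * Ltot * (\<Sum>s\<in>{k-t..<k}. stepsize s)"
  using assms
  by (intro grad_l1_lipschitz[OF smooth L_nonneg X_in_supp_vec X_in_supp_vec])
    (auto simp: abs_minus_commute intro: abs_X_diff_le)

text \<open>After warm-up the direction is the momentum, which up to the factor
  c = 1/((1-\<beta>) \<Sum>\<beta>^t) is a convex combination of past gradient estimates.\<close>
lemma sgn_dir_bias:
  assumes "C \<le> k" and "i < d"
  shows "\<bar>g (X k \<omega>) i\<bar>
      - 2 * (\<Sum>t\<le>k. \<beta>^t * (\<bar>g (X k \<omega>) i - g (X (k - t) \<omega>) i\<bar> + \<bar>noise (k - t) \<omega> i\<bar>))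
    \<le> g (X k \<omega>) i * sgn (dir k \<omega> i)"
proof -
  define W where "W = (\<Sum>t\<le>k. \<beta>^t)"
  have W: "1 \<le> W" unfolding W_def using member_le_sum[of 0 "{..k}" "\<lambda>t. \<beta>^t"] beta_pos by simp
  define c where "c = 1 / ((1 - \<beta>) * W)"
  have c: "0 < c" using W beta_less_one by (simp add: c_def)
  have "dir k \<omega> i = mom (Suc k) \<omega> i" using assms by (simp add: dir_def mom_Suc)
  then have "c * dir k \<omega> i = (\<Sum>t\<le>k. \<beta>^t * grad_est (k - t) \<omega> i) / W"
    using beta_less_one W by (simp add: mom_Suc_eq_sum c_def)
  moreover have "g (X k \<omega>) i = (\<Sum>t\<le>k. \<beta>^t * g (X k \<omega>) i) / W"
    using W by (simp add: W_def flip: sum_distrib_right)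
  ultimately have "g (X k \<omega>) i - c * dir k \<omega> i
      = (\<Sum>t\<le>k. \<beta>^t * (g (X k \<omega>) i - grad_est (k - t) \<omega> i)) / W"
    by (simp add: diff_divide_distrib sum_subtractf algebra_simps)
  then have "\<bar>g (X k \<omega>) i - c * dir k \<omega> i\<bar> \<le> \<bar>\<Sum>t\<le>k. \<beta>^t * (g (X k \<omega>) i - grad_est (k - t) \<omega> i)\<bar>"
    using W by (simp add: divide_le_eq mult_le_cancel_left1 abs_divide)
  also have "\<dots> \<le> (\<Sum>t\<le>k. \<beta>^t * (\<bar>g (X k \<omega>) i - g (X (k - t) \<omega>) i\<bar> + \<bar>noise (k - t) \<omega> i\<bar>))"
  proof (rule order_trans[OF sum_abs sum_mono])
    fix t
    have "\<bar>g (X k \<omega>) i - grad_est (k - t) \<omega> i\<bar>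
        \<le> \<bar>g (X k \<omega>) i - g (X (k - t) \<omega>) i\<bar> + \<bar>noise (k - t) \<omega> i\<bar>"
      by (simp add: noise_def)
    then show "\<bar>\<beta>^t * (g (X k \<omega>) i - grad_est (k - t) \<omega> i)\<bar>
        \<le> \<beta>^t * (\<bar>g (X k \<omega>) i - g (X (k - t) \<omega>) i\<bar> + \<bar>noise (k - t) \<omega> i\<bar>)"
      using beta_pos by (simp add: abs_mult mult_left_mono)
  qed
  finally have "\<bar>g (X k \<omega>) i\<bar>
      - 2 * (\<Sum>t\<le>k. \<beta>^t * (\<bar>g (X k \<omega>) i - g (X (k - t) \<omega>) i\<bar> + \<bar>noise (k - t) \<omega> i\<bar>))
    \<le> \<bar>g (X k \<omega>) i\<bar> - 2 * \<bar>g (X k \<omega>) i - c * dir k \<omega> i\<bar>"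
    by simp
  also have "\<dots> \<le> g (X k \<omega>) i * sgn (dir k \<omega> i)"
    by (rule abs_le_mult_sgn[OF c])
  finally show ?thesis .
qed

lemma descent_with_bias:
  assumes "C \<le> k"
  shows "f (X (Suc k) \<omega>) \<le> f (X k \<omega>) - stepsize k * l1norm d (g (X k \<omega>))
     + 2 * stepsize k * (\<Sum>t\<le>k. \<beta>^t * (3 * Ltot * (\<Sum>s\<in>{k-t..<k}. stepsize s)
         + (\<Sum>i<d. \<bar>noise (k-t) \<omega> i\<bar>)))
     + 1/2 * (stepsize k)\<^sup>2 * Ltot"
proof -
  define x where "x = X k \<omega>"
  define y where "y = X (Suc k) \<omega>"
  define a where "a t i = \<bar>g x i - g (X (k - t) \<omega>) i\<bar>" for t i
  define e where "e t i = \<bar>noise (k - t) \<omega> i\<bar>" for t i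
  have smooth_xy: "f y \<le> f x + (\<Sum>i<d. g x i * (y i - x i)) + 1/2 * (\<Sum>i<d. L i * (y i - x i)\<^sup>2)"
    using abs_le_D1[OF smooth[rule_format, OF X_in_supp_vec[of k \<omega>] X_in_supp_vec[of "Suc k" \<omega>]]]
    unfolding x_def y_def by linarith
  have linear: "(\<Sum>i<d. g x i * (y i - x i)) = - stepsize k * (\<Sum>i<d. g x i * sgn (dir k \<omega> i))"
    by (simp add: sum_distrib_left x_def y_def X_Suc algebra_simps)
  have "- (\<Sum>i<d. g x i * sgn (dir k \<omega> i)) \<le> (\<Sum>i<d. 2 * (\<Sum>t\<le>k. \<beta>^t * (a t i + e t i)) - \<bar>g x i\<bar>)"
    unfolding sum_negf[symmetric] x_def a_def e_def
  proof (intro sum_mono)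
    fix i assume "i \<in> {..<d}"
    then show "- (g (X k \<omega>) i * sgn (dir k \<omega> i))
        \<le> 2 * (\<Sum>t\<le>k. \<beta>^t * (\<bar>g (X k \<omega>) i - g (X (k - t) \<omega>) i\<bar> + \<bar>noise (k - t) \<omega> i\<bar>))
          - \<bar>g (X k \<omega>) i\<bar>"
      using sgn_dir_bias[OF assms, of i \<omega>] by simp
  qed
  also have "\<dots> = 2 * (\<Sum>t\<le>k. \<beta>^t * ((\<Sum>i<d. a t i) + (\<Sum>i<d. e t i))) - l1norm d (g x)"
    by (simp add: l1norm_def sum_subtractf sum_distrib_left sum.distrib distrib_left
        flip: sum.swap[of _ "{..<d}" "{..k}"])
  also have "\<dots> \<le> 2 * (\<Sum>t\<le>k. \<beta>^t * (3 * Ltot * (\<Sum>s\<in>{k-t..<k}. stepsize s)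
         + (\<Sum>i<d. \<bar>noise (k-t) \<omega> i\<bar>))) - l1norm d (g x)"
    unfolding a_def e_def x_def using beta_pos
    by (intro diff_right_mono mult_left_mono sum_mono add_right_mono grad_drift_le) auto
  finally have "stepsize k * (- (\<Sum>i<d. g x i * sgn (dir k \<omega> i))) \<le> stepsize k * (2 * (\<Sum>t\<le>k. \<beta>^t *
      (3 * Ltot * (\<Sum>s\<in>{k-t..<k}. stepsize s) + (\<Sum>i<d. \<bar>noise (k-t) \<omega> i\<bar>))) - l1norm d (g x))"
    using stepsize_nonneg[of k] by (rule mult_left_mono)
  then have bias: "(\<Sum>i<d. g x i * (y i - x i)) \<le> stepsize k * (2 * (\<Sum>t\<le>k. \<beta>^t *
      (3 * Ltot * (\<Sum>s\<in>{k-t..<k}. stepsize s) + (\<Sum>i<d. \<bar>noise (k-t) \<omega> i\<bar>))) - l1norm d (g x))"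
    by (simp add: linear)
  have "\<bar>y i - x i\<bar> \<le> stepsize k" if "i < d" for i
    using stepsize_nonneg[of k] by (simp add: x_def y_def X_Suc abs_mult sgn_if)
  then have quad: "(\<Sum>i<d. L i * (y i - x i)\<^sup>2) \<le> Ltot * (stepsize k)\<^sup>2"
    by (rule weighted_sum_squares_le[OF L_nonneg])
  show ?thesis
    using smooth_xy bias quad unfolding x_def y_def by (simp add: algebra_simps)
qed

lemma stepsize_le: "m \<le> s \<Longrightarrow> stepsize s \<le> \<delta> / sqrt (real m + 1)"
  using delta_pos by (simp add: stepsize_def divide_left_mono)

lemma stepsize_square: "(stepsize k)\<^sup>2 = \<delta>\<^sup>2 / (real k + 1)"
  by (simp add: stepsize_def power_divide add.commute)

lemma stepsize_div_sqrt_le: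
  assumes "t \<le> k"
  shows "stepsize k / sqrt (real (k - t) + 1) \<le> \<delta> * (real t + 1) / (real k + 1)"
proof -
  have "stepsize k / sqrt (real (k - t) + 1) = \<delta> * (1 / (sqrt (real k + 1) * sqrt (real (k - t) + 1)))"
    by (simp add: stepsize_def add.commute)
  also have "\<dots> \<le> \<delta> * ((real t + 1) / (real k + 1))"
    using inverse_sqrt_mult_le[OF assms] delta_pos by (intro mult_left_mono) auto
  finally show ?thesis by simp
qed

lemma stepsize_mult_sum_le:
  assumes "t \<le> k"
  shows "stepsize k * (\<Sum>s\<in>{k-t..<k}. stepsize s) \<le> \<delta>\<^sup>2 * (real t + 1)\<^sup>2 / (real k + 1)"
proof -
  have "(\<Sum>s\<in>{k-t..<k}. stepsize s) \<le> (\<Sum>s\<in>{k-t..<k}. \<delta> / sqrt (real (k - t) + 1))"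
    by (intro sum_mono stepsize_le) auto
  also have "\<dots> = real t * (\<delta> / sqrt (real (k - t) + 1))" using assms by simp
  finally have "stepsize k * (\<Sum>s\<in>{k-t..<k}. stepsize s)
      \<le> stepsize k * (real t * (\<delta> / sqrt (real (k - t) + 1)))"
    using stepsize_nonneg[of k] by (rule mult_left_mono)
  also have "\<dots> = real t * \<delta> * (stepsize k / sqrt (real (k - t) + 1))"
    by simp
  also have "\<dots> \<le> (real t + 1) * \<delta> * (\<delta> * (real t + 1) / (real k + 1))"
    using stepsize_div_sqrt_le[OF assms] delta_pos
    by (intro mult_mono) (auto simp: stepsize_nonneg)
  also have "\<dots> = \<delta>\<^sup>2 * (real t + 1)\<^sup>2 / (real k + 1)"
    by (simp add: power2_eq_square)
  finally show ?thesis .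
qed

lemma drift_error_le:
  "2 * stepsize k * (\<Sum>t\<le>k. \<beta>^t * (3 * Ltot * (\<Sum>s\<in>{k-t..<k}. stepsize s))) + 1/2 * (stepsize k)\<^sup>2 * Ltot
     \<le> \<delta>\<^sup>2 * Ltot * (6 * lag_weight \<beta> + 1/2) / (real k + 1)"
proof -
  text \<open>\<Lambda> stands for Ltot, abstracted so that simp does not distribute over its sum.\<close>
  have factor: "2 * stepsize k * (\<Sum>t\<le>k. \<beta>^t * (3 * \<Lambda> * (\<Sum>s\<in>{k-t..<k}. stepsize s)))
      = 6 * \<Lambda> * (\<Sum>t\<le>k. \<beta>^t * (stepsize k * (\<Sum>s\<in>{k-t..<k}. stepsize s)))" for \<Lambda>
    by (simp add: sum_distrib_left algebra_simps)
  have "2 * stepsize k * (\<Sum>t\<le>k. \<beta>^t * (3 * Ltot * (\<Sum>s\<in>{k-t..<k}. stepsize s)))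
      = 6 * Ltot * (\<Sum>t\<le>k. \<beta>^t * (stepsize k * (\<Sum>s\<in>{k-t..<k}. stepsize s)))"
    by (rule factor)
  also have "\<dots> \<le> 6 * Ltot * (\<Sum>t\<le>k. \<beta>^t * (\<delta>\<^sup>2 * (real t + 1)\<^sup>2 / (real k + 1)))"
    using Ltot_nonneg beta_pos stepsize_mult_sum_le by (intro mult_left_mono sum_mono) auto
  also have "\<dots> = 6 * Ltot * (\<delta>\<^sup>2 / (real k + 1)) * (\<Sum>t\<le>k. \<beta>^t * (real t + 1)\<^sup>2)"
    by (simp add: sum_distrib_left sum_divide_distrib mult_ac)
  also have "\<dots> \<le> 6 * Ltot * (\<delta>\<^sup>2 / (real k + 1)) * lag_weight \<beta>"
    using Ltot_nonneg beta_pos beta_less_one by (intro mult_left_mono sum_le_lag_weight) auto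
  finally have drift: "2 * stepsize k * (\<Sum>t\<le>k. \<beta>^t * (3 * Ltot * (\<Sum>s\<in>{k-t..<k}. stepsize s)))
      \<le> 6 * Ltot * (\<delta>\<^sup>2 / (real k + 1)) * lag_weight \<beta>" .
  have split: "\<delta>\<^sup>2 * \<Lambda> * (6 * lag_weight \<beta> + 1/2) / (real k + 1)
      = 6 * \<Lambda> * (\<delta>\<^sup>2 / (real k + 1)) * lag_weight \<beta> + 1/2 * (\<delta>\<^sup>2 / (real k + 1)) * \<Lambda>" for \<Lambda>
  proof -
    define q where "q = \<delta>\<^sup>2 / (real k + 1)"
    have "\<delta>\<^sup>2 * \<Lambda> * (6 * lag_weight \<beta> + 1/2) / (real k + 1) = q * \<Lambda> * (6 * lag_weight \<beta> + 1/2)"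
      by (simp add: q_def)
    then show ?thesis unfolding q_def[symmetric] by (simp add: algebra_simps)
  qed
  show ?thesis unfolding split stepsize_square using drift by linarith
qed

lemma noise_weight_le:
  assumes "0 \<le> S"
  shows "2 * stepsize k * (\<Sum>t\<le>k. \<beta>^t * (S / sqrt (real (k - t) + 1)))
     \<le> 2 * \<delta> * S * lag_weight \<beta> / (real k + 1)"
proof -
  have "2 * stepsize k * (\<Sum>t\<le>k. \<beta>^t * (S / sqrt (real (k - t) + 1)))
      = 2 * S * (\<Sum>t\<le>k. \<beta>^t * (stepsize k / sqrt (real (k - t) + 1)))"
    by (simp add: sum_distrib_left algebra_simps)
  also have "\<dots> \<le> 2 * S * (\<Sum>t\<le>k. \<beta>^t * (\<delta> * (real t + 1)\<^sup>2 / (real k + 1)))"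
  proof (intro mult_left_mono sum_mono)
    fix t assume "t \<in> {..k}"
    then have "stepsize k / sqrt (real (k - t) + 1) \<le> \<delta> * (real t + 1) / (real k + 1)"
      by (intro stepsize_div_sqrt_le) auto
    also have "\<dots> \<le> \<delta> * (real t + 1)\<^sup>2 / (real k + 1)"
      using delta_pos by (intro divide_right_mono mult_left_mono) (auto simp: power2_eq_square)
    finally show "stepsize k / sqrt (real (k - t) + 1) \<le> \<delta> * (real t + 1)\<^sup>2 / (real k + 1)" .
  qed (use assms beta_pos in auto)
  also have "\<dots> = 2 * S * (\<delta> / (real k + 1)) * (\<Sum>t\<le>k. \<beta>^t * (real t + 1)\<^sup>2)"
    by (simp add: sum_distrib_left algebra_simps)
  also have "\<dots> \<le> 2 * S * (\<delta> / (real k + 1)) * lag_weight \<beta>"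
    using assms delta_pos beta_pos beta_less_one by (intro mult_left_mono sum_le_lag_weight) auto
  finally show ?thesis by (simp add: mult_ac)
qed

lemma descent_step:
  assumes "C \<le> k"
  shows "f (X (Suc k) \<omega>) \<le> f (X k \<omega>) - stepsize k * l1norm d (g (X k \<omega>))
     + \<delta>\<^sup>2 * Ltot * (6 * lag_weight \<beta> + 1/2) / (real k + 1)
     + 2 * stepsize k * (\<Sum>t\<le>k. \<beta>^t * (\<Sum>i<d. \<bar>noise (k-t) \<omega> i\<bar>))"
  using descent_with_bias[OF assms, of \<omega>] drift_error_le[of k]
  by (simp add: distrib_left sum.distrib)

definition sign_vectors :: "(nat \<Rightarrow> real) set" where
  "sign_vectors = (\<lambda>s i. if i < d then s i else 0) ` PiE {..<d} (\<lambda>_. {-1, 0, 1})"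

primrec reachable :: "nat \<Rightarrow> (nat \<Rightarrow> real) set" where
  "reachable 0 = {x0}"
| "reachable (Suc k) = (\<lambda>(x, s) i. x i - stepsize k * s i) ` (reachable k \<times> sign_vectors)"

lemma finite_sign_vectors: "finite sign_vectors"
  unfolding sign_vectors_def by (intro finite_imageI finite_PiE) auto

lemma finite_reachable: "finite (reachable k)"
  by (induction k) (auto intro!: finite_imageI finite_cartesian_product finite_sign_vectors)

lemma sgn_in_sign_vectors: "(\<lambda>i. if i < d then sgn (a i) else 0) \<in> sign_vectors"
  unfolding sign_vectors_def
  by (rule image_eqI[where x = "restrict (\<lambda>i. sgn (a i)) {..<d}"]) (auto simp: sgn_if)

lemma sign_vectors_vanish: "s \<in> sign_vectors \<Longrightarrow> d \<le> i \<Longrightarrow> s i = 0"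
  unfolding sign_vectors_def by (erule imageE) simp

lemma X_in_reachable: "X k \<omega> \<in> reachable k"
proof (induction k)
  case 0
  then show ?case by (simp add: X_0)
next
  case (Suc k)
  then have "(X k \<omega>, \<lambda>i. if i < d then sgn (dir k \<omega> i) else 0) \<in> reachable k \<times> sign_vectors"
    using sgn_in_sign_vectors by blast
  then show ?case unfolding reachable.simps X_Suc by (rule rev_image_eqI) (simp add: fun_eq_iff)
qed

lemma reachable_subset_supp_vec: "reachable k \<subseteq> supp_vec d"
proof (induction k)
  case 0
  then show ?case using x0_in by simp
next
  case (Suc k)
  show ?case
  proof
    fix y assume "y \<in> reachable (Suc k)"
    then obtain x s where "x \<in> reachable k" and s: "s \<in> sign_vectors"
      and y: "y = (\<lambda>i. x i - stepsize k * s i)"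
      by auto
    then show "y \<in> supp_vec d"
      using Suc sign_vectors_vanish[OF s] by (auto simp: y supp_vec_def)
  qed
qed

lemma X_mom_depend_on_earlier_batches:
  assumes "\<And>p. fst p < k \<Longrightarrow> \<omega> p = \<omega>' p"
  shows "X k \<omega> = X k \<omega>' \<and> mom k \<omega> = mom k \<omega>'"
  using assms
proof (induction k)
  case 0
  then show ?case by (simp add: X_0 mom_0)
next
  case (Suc k)
  then have IH: "X k \<omega> = X k \<omega>'" "mom k \<omega> = mom k \<omega>'" by auto
  have sums: "(\<Sum>j<k + 1. G x (\<omega> (k, j)) i) = (\<Sum>j<k + 1. G x (\<omega>' (k, j)) i)" for x i
    using Suc.prems by (intro sum.cong refl) simp
  have grad: "grad_est k \<omega> = grad_est k \<omega>'"
    by (simp only: grad_est_def minibatch_def IH sums)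
  have dir_eq: "dir k \<omega> i = dir k \<omega>' i" and grad_eq: "grad_est k \<omega> i = grad_est k \<omega>' i" for i
    by (simp_all add: dir_def IH grad)
  show ?case unfolding X_Suc mom_Suc IH by (simp only: dir_eq grad_eq)
qed

end

section \<open>Expected descent\<close>

locale signum_stochastic = signum_path +
  fixes N :: "real measure" and \<sigma> :: "nat \<Rightarrow> real"
  assumes prob_N: "prob_space N"
    and G_measurable: "\<forall>i<d. (\<lambda>p. G (fst p) (snd p) i) \<in> borel_measurable (borel \<Otimes>\<^sub>M N)"
    and G_unbiased: "\<forall>x\<in>supp_vec d. \<forall>i<d. integrable N (\<lambda>u. G x u i) \<and> (\<integral>u. G x u i \<partial>N) = g x i"
    and sigma_nonneg: "\<forall>i<d. 0 \<le> \<sigma> i"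
    and G_variance: "\<forall>x\<in>supp_vec d. \<forall>i<d. integrable N (\<lambda>u. (G x u i - g x i)\<^sup>2) \<and>
        (\<integral>u. (G x u i - g x i)\<^sup>2 \<partial>N) \<le> (\<sigma> i)\<^sup>2"
begin

abbreviation PM :: "(nat \<times> nat \<Rightarrow> real) measure" where
  "PM \<equiv> PiM UNIV (\<lambda>_. N)"

sublocale PM: prob_space PM
  by (intro prob_space_PiM prob_N)

lemma G_component_measurable: "i < d \<Longrightarrow> (\<lambda>u. G v u i) \<in> borel_measurable N"
  using measurable_compose[OF measurable_Pair1'[of v borel N] G_measurable[rule_format]] by simp

lemma minibatch_measurable:
  assumes "\<And>p. fst p = k \<Longrightarrow> (\<lambda>\<omega>. \<omega> p) \<in> measurable M N"
  shows "(\<lambda>\<omega>. minibatch d G k v \<omega> i) \<in> borel_measurable M"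
proof (cases "i < d")
  case True
  have "(\<lambda>\<omega>. G v (\<omega> (k, j)) i) \<in> borel_measurable M" for j
    using measurable_compose[OF assms G_component_measurable[OF True]] by simp
  then show ?thesis using True by (simp add: minibatch_def)
qed (simp add: minibatch_def)

lemma sgn_vector_measurable:
  assumes "\<And>i. (\<lambda>\<omega>. F \<omega> i) \<in> borel_measurable M"
  shows "(\<lambda>\<omega> i. if i < d then sgn (F \<omega> i) else 0) \<in> measurable M (count_space sign_vectors)"
proof (subst measurable_count_space_eq2[OF finite_sign_vectors], intro conjI ballI)
  show "(\<lambda>\<omega> i. if i < d then sgn (F \<omega> i) else 0) \<in> space M \<rightarrow> sign_vectors"
    using sgn_in_sign_vectors by auto
  fix s assume s: "s \<in> sign_vectors"
  have "(\<lambda>\<omega> i. if i < d then sgn (F \<omega> i) else 0) -` {s} \<inter> space M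
      = {\<omega> \<in> space M. \<forall>i. i < d \<longrightarrow> sgn (F \<omega> i) = s i}"
    using sign_vectors_vanish[OF s] by (auto simp: fun_eq_iff)
  also have "\<dots> \<in> sets M" using assms by measurable
  finally show "(\<lambda>\<omega> i. if i < d then sgn (F \<omega> i) else 0) -` {s} \<inter> space M \<in> sets M" .
qed

text \<open>The finite range of the iterate is what makes conditioning on it elementary.\<close>
lemma X_measurable:
  assumes "\<And>p. fst p < k \<Longrightarrow> (\<lambda>\<omega>. \<omega> p) \<in> measurable M N"
  shows "X k \<in> measurable M (count_space (reachable k))"
    and "(\<lambda>\<omega>. mom k \<omega> i) \<in> borel_measurable M"
proof -
  have "X k \<in> measurable M (count_space (reachable k)) \<and> (\<forall>i. (\<lambda>\<omega>. mom k \<omega> i) \<in> borel_measurable M)"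
    using assms
  proof (induction k)
    case 0
    then show ?case by (simp add: X_0 mom_0 measurable_count_space_eq2 finite_reachable)
  next
    case (Suc k)
    then have X_meas: "X k \<in> measurable M (count_space (reachable k))"
      and mom_meas: "\<And>i. (\<lambda>\<omega>. mom k \<omega> i) \<in> borel_measurable M" by auto
    have grad_meas: "(\<lambda>\<omega>. grad_est k \<omega> i) \<in> borel_measurable M" for i
      unfolding grad_est_def
      by (rule measurable_compose_countable'[where f = "\<lambda>v \<omega>. minibatch d G k v \<omega> i", OF _ X_meas])
        (auto intro!: minibatch_measurable Suc.prems countable_finite finite_reachable)
    have dir_meas: "(\<lambda>\<omega>. dir k \<omega> i) \<in> borel_measurable M" for i
      unfolding dir_def using grad_meas mom_meas by measurable
    define sv where "sv \<omega> = (\<lambda>i. if i < d then sgn (dir k \<omega> i) else 0)" for \<omega>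
    have sv_meas: "sv \<in> measurable M (count_space sign_vectors)"
      unfolding sv_def using dir_meas by (rule sgn_vector_measurable)
    have "X (Suc k) = (\<lambda>\<omega>. (\<lambda>v \<omega>. (\<lambda>i. v i - stepsize k * sv \<omega> i)) (X k \<omega>) \<omega>)"
      by (simp add: fun_eq_iff X_Suc sv_def)
    also have "\<dots> \<in> measurable M (count_space (reachable (Suc k)))"
    proof (rule measurable_compose_countable'[OF _ X_meas countable_finite[OF finite_reachable]])
      fix v assume "v \<in> reachable k"
      then have "(\<lambda>s i. v i - stepsize k * s i) \<in> measurable (count_space sign_vectors) (count_space (reachable (Suc k)))"
        by auto
      from measurable_compose[OF sv_meas this]
      show "(\<lambda>\<omega> i. v i - stepsize k * sv \<omega> i) \<in> measurable M (count_space (reachable (Suc k)))" by simp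
    qed
    moreover have "(\<lambda>\<omega>. mom (Suc k) \<omega> i) \<in> borel_measurable M" for i
      unfolding mom_Suc using grad_meas mom_meas by measurable
    ultimately show ?case by auto
  qed
  then show "X k \<in> measurable M (count_space (reachable k))"
    and "(\<lambda>\<omega>. mom k \<omega> i) \<in> borel_measurable M" by auto
qed

lemma component_measurable: "(\<lambda>\<omega>. \<omega> p) \<in> measurable PM N"
  by (rule measurable_component_singleton) simp

lemma integrable_comp_X: "integrable PM (\<lambda>\<omega>. \<phi> (X k \<omega>) :: real)"
proof (rule PM.integrable_const_bound[where B = "\<Sum>v\<in>reachable k. \<bar>\<phi> v\<bar>"])
  show "AE \<omega> in PM. norm (\<phi> (X k \<omega>)) \<le> (\<Sum>v\<in>reachable k. \<bar>\<phi> v\<bar>)"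
    using X_in_reachable finite_reachable
    by (intro AE_I2) (simp add: member_le_sum[where f = "\<lambda>v. \<bar>\<phi> v\<bar>"])
  have "\<phi> \<in> borel_measurable (count_space (reachable k))" by simp
  with X_measurable(1)[OF component_measurable] show "(\<lambda>\<omega>. \<phi> (X k \<omega>)) \<in> borel_measurable PM"
    by (rule measurable_compose)
qed

lemma minibatch_error_abs_integral_le:
  assumes v: "v \<in> supp_vec d" and i: "i < d"
  shows "integrable PM (\<lambda>\<omega>. \<bar>minibatch d G j v \<omega> i - g v i\<bar>)"
    and "(\<integral>\<omega>. \<bar>minibatch d G j v \<omega> i - g v i\<bar> \<partial>PM) \<le> \<sigma> i / sqrt (real (j + 1))"
proof -
  interpret N: prob_space N by (rule prob_N)
  define h where "h u = G v u i - g v i" for u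
  have h_meas: "h \<in> borel_measurable N"
    unfolding h_def using G_component_measurable[OF i] by measurable
  have h_sq: "integrable N (\<lambda>u. (h u)\<^sup>2)" and h_var: "(\<integral>u. (h u)\<^sup>2 \<partial>N) \<le> (\<sigma> i)\<^sup>2"
    unfolding h_def using G_variance v i by auto
  have h_mean: "(\<integral>u. h u \<partial>N) = 0"
    unfolding h_def using G_unbiased v i by (simp add: Bochner_Integration.integral_diff N.prob_space)
  have inj: "inj_on (\<lambda>l. (j, l)) {..<j + 1}" by (simp add: inj_on_def)
  have err: "minibatch d G j v \<omega> i - g v i = (\<Sum>l<j + 1. h (\<omega> (j, l))) / real (j + 1)" for \<omega>
  proof -
    have "(\<Sum>l<j + 1. h (\<omega> (j, l))) = (\<Sum>l<j + 1. G v (\<omega> (j, l)) i) - real (j + 1) * g v i"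
      by (simp add: h_def sum_subtractf)
    then show ?thesis using i by (simp add: minibatch_def diff_divide_distrib)
  qed
  have "(\<lambda>\<omega>. h (\<omega> (j, l))) \<in> borel_measurable PM" for l
    using measurable_compose[OF component_measurable h_meas] .
  then have Y_meas: "(\<lambda>\<omega>. (\<Sum>l<j + 1. h (\<omega> (j, l))) / real (j + 1)) \<in> borel_measurable PM"
    by (intro borel_measurable_divide borel_measurable_sum borel_measurable_const)
  note sq = integrable_sample_mean_square[OF prob_N h_meas h_sq h_mean inj]
    integral_sample_mean_square[OF prob_N h_meas h_sq h_mean inj]
  show "integrable PM (\<lambda>\<omega>. \<bar>minibatch d G j v \<omega> i - g v i\<bar>)"
    unfolding err using PM.expectation_abs_le_sqrt_second_moment(1)[OF Y_meas] sq by simp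
  have "(\<integral>\<omega>. \<bar>minibatch d G j v \<omega> i - g v i\<bar> \<partial>PM) \<le> sqrt ((\<integral>u. (h u)\<^sup>2 \<partial>N) / real (j + 1))"
    unfolding err using PM.expectation_abs_le_sqrt_second_moment(2)[OF Y_meas] sq by simp
  also have "\<dots> \<le> sqrt ((\<sigma> i)\<^sup>2 / real (j + 1))"
    using h_var by (intro real_sqrt_le_mono divide_right_mono) auto
  also have "\<dots> = \<sigma> i / sqrt (real (j + 1))"
    using sigma_nonneg i by (simp add: real_sqrt_divide)
  finally show "(\<integral>\<omega>. \<bar>minibatch d G j v \<omega> i - g v i\<bar> \<partial>PM) \<le> \<sigma> i / sqrt (real (j + 1))" .
qed

text \<open>X j depends on the batches before step j only.\<close>
lemma X_indep_minibatch_error: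
  assumes i: "i < d"
  shows "PM.indep_var borel (\<lambda>\<omega>. if X j \<omega> = v then 1 else (0::real))
    borel (\<lambda>\<omega>. \<bar>minibatch d G j v \<omega> i - g v i\<bar>)"
proof -
  define A where "A = {p :: nat \<times> nat. fst p < j}"
  define B where "B = {p :: nat \<times> nat. fst p = j}"
  have "PM.indep_var borel (\<lambda>\<omega>. (\<lambda>\<eta>. if X j \<eta> = v then 1 else (0::real)) (restrict \<omega> A))
      borel (\<lambda>\<omega>. (\<lambda>\<eta>. \<bar>minibatch d G j v \<eta> i - g v i\<bar>) (restrict \<omega> B))"
  proof (rule indep_var_PiM_restrict[OF prob_N])
    have "X j \<in> measurable (PiM A (\<lambda>_. N)) (count_space (reachable j))"
      by (rule X_measurable(1)) (auto simp: A_def intro!: measurable_component_singleton)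
    then show "(\<lambda>\<eta>. if X j \<eta> = v then 1 else (0::real)) \<in> borel_measurable (PiM A (\<lambda>_. N))"
      by (rule measurable_compose) simp
    have "(\<lambda>\<eta>. G v (\<eta> (j, l)) i) \<in> borel_measurable (PiM B (\<lambda>_. N))" for l
      using measurable_compose[OF measurable_component_singleton[of "(j, l)" B] G_component_measurable[OF i]]
      by (simp add: B_def)
    then show "(\<lambda>\<eta>. \<bar>minibatch d G j v \<eta> i - g v i\<bar>) \<in> borel_measurable (PiM B (\<lambda>_. N))"
      using i unfolding minibatch_def by measurable
  qed (auto simp: A_def B_def)
  moreover have "X j (restrict \<omega> A) = X j \<omega>" for \<omega>
    using X_mom_depend_on_earlier_batches[of j "restrict \<omega> A" \<omega>] by (auto simp: A_def)
  moreover have "minibatch d G j v (restrict \<omega> B) = minibatch d G j v \<omega>" for \<omega>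
  proof -
    have batch: "restrict \<omega> B (j, l) = \<omega> (j, l)" for l by (simp add: B_def)
    show ?thesis unfolding minibatch_def batch by (rule refl)
  qed
  ultimately show ?thesis by simp
qed

lemma noise_abs_integral_le:
  assumes i: "i < d"
  shows "integrable PM (\<lambda>\<omega>. \<bar>noise j \<omega> i\<bar>)"
    and "(\<integral>\<omega>. \<bar>noise j \<omega> i\<bar> \<partial>PM) \<le> \<sigma> i / sqrt (real (j + 1))"
proof -
  define Y where "Y v \<omega> = \<bar>minibatch d G j v \<omega> i - g v i\<bar>" for v \<omega>
  define ind where "ind v \<omega> = (if X j \<omega> = v then 1 else (0::real))" for v \<omega>
  define s where "s = \<sigma> i / sqrt (real (j + 1))"
  have noise_eq: "\<bar>noise j \<omega> i\<bar> = (\<Sum>v\<in>reachable j. ind v \<omega> * Y v \<omega>)" for \<omega>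
  proof -
    have "(\<Sum>v\<in>reachable j. ind v \<omega> * Y v \<omega>) = (\<Sum>v\<in>reachable j. if X j \<omega> = v then Y v \<omega> else 0)"
      by (intro sum.cong) (auto simp: ind_def)
    also have "\<dots> = Y (X j \<omega>) \<omega>"
      using X_in_reachable finite_reachable by (simp add: sum.delta)
    finally show ?thesis by (simp add: Y_def noise_def grad_est_def)
  qed
  have ind_int: "integrable PM (ind v)" for v
    unfolding ind_def using integrable_comp_X[of "\<lambda>x. if x = v then 1 else 0" j] by simp
  have weighted: "integrable PM (\<lambda>\<omega>. ind v \<omega> * Y v \<omega>)
      \<and> (\<integral>\<omega>. ind v \<omega> * Y v \<omega> \<partial>PM) \<le> (\<integral>\<omega>. ind v \<omega> \<partial>PM) * s" if v: "v \<in> reachable j" for v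
  proof -
    have "v \<in> supp_vec d" using v reachable_subset_supp_vec by blast
    note Y = minibatch_error_abs_integral_le[OF this i, of j, folded Y_def s_def]
    have indep: "PM.indep_var borel (ind v) borel (Y v)"
      using X_indep_minibatch_error[OF i, of j v] unfolding ind_def[abs_def] Y_def[abs_def] .
    have "(\<integral>\<omega>. ind v \<omega> * Y v \<omega> \<partial>PM) = (\<integral>\<omega>. ind v \<omega> \<partial>PM) * (\<integral>\<omega>. Y v \<omega> \<partial>PM)"
      by (rule PM.indep_var_lebesgue_integral[OF indep ind_int Y(1)])
    also have "\<dots> \<le> (\<integral>\<omega>. ind v \<omega> \<partial>PM) * s"
      using Y(2) by (intro mult_left_mono) (auto simp: ind_def)
    finally show ?thesis using PM.indep_var_integrable[OF indep ind_int Y(1)] by simp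
  qed
  show "integrable PM (\<lambda>\<omega>. \<bar>noise j \<omega> i\<bar>)"
    unfolding noise_eq using weighted by (intro Bochner_Integration.integrable_sum) auto
  have "(\<integral>\<omega>. \<bar>noise j \<omega> i\<bar> \<partial>PM) = (\<Sum>v\<in>reachable j. (\<integral>\<omega>. ind v \<omega> * Y v \<omega> \<partial>PM))"
    unfolding noise_eq using weighted by (intro Bochner_Integration.integral_sum) auto
  also have "\<dots> \<le> (\<Sum>v\<in>reachable j. (\<integral>\<omega>. ind v \<omega> \<partial>PM) * s)"
    using weighted by (intro sum_mono) auto
  also have "\<dots> = (\<integral>\<omega>. (\<Sum>v\<in>reachable j. ind v \<omega>) \<partial>PM) * s"
    using ind_int by (simp add: Bochner_Integration.integral_sum sum_distrib_right)
  also have "\<dots> = s"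
    using X_in_reachable finite_reachable by (simp add: ind_def sum.delta PM.prob_space)
  finally show "(\<integral>\<omega>. \<bar>noise j \<omega> i\<bar> \<partial>PM) \<le> \<sigma> i / sqrt (real (j + 1))" by (simp add: s_def)
qed

definition expected_f :: "nat \<Rightarrow> real" where
  "expected_f k = (\<integral>\<omega>. f (X k \<omega>) \<partial>PM)"

definition expected_grad_norm :: "nat \<Rightarrow> real" where
  "expected_grad_norm k = (\<integral>\<omega>. l1norm d (g (X k \<omega>)) \<partial>PM)"

definition descent_const :: real where
  "descent_const = \<delta>\<^sup>2 * Ltot * (6 * lag_weight \<beta> + 1/2) + 2 * \<delta> * (\<Sum>i<d. \<sigma> i) * lag_weight \<beta>"

lemma sigma_sum_nonneg: "0 \<le> (\<Sum>i<d. \<sigma> i)"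
  using sigma_nonneg by (intro sum_nonneg) auto

lemma descent_const_nonneg: "0 \<le> descent_const"
  unfolding descent_const_def
  using Ltot_nonneg sigma_sum_nonneg delta_pos lag_weight_nonneg[of \<beta>] beta_pos beta_less_one
  by (intro add_nonneg_nonneg mult_nonneg_nonneg) auto

lemma expected_grad_norm_nonneg: "0 \<le> expected_grad_norm k"
  unfolding expected_grad_norm_def l1norm_def by (intro integral_nonneg_AE AE_I2 sum_nonneg) auto

lemma expected_f_lower_bound:
  assumes "\<forall>x\<in>supp_vec d. fstar \<le> f x"
  shows "fstar \<le> expected_f k"
proof -
  have "(\<integral>\<omega>. fstar \<partial>PM) \<le> expected_f k"
    unfolding expected_f_def using integrable_comp_X assms X_in_supp_vec by (intro integral_mono) auto
  then show ?thesis by (simp add: PM.prob_space)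
qed

lemma expected_noise_le:
  "(\<integral>\<omega>. 2 * stepsize k * (\<Sum>t\<le>k. \<beta>^t * (\<Sum>i<d. \<bar>noise (k - t) \<omega> i\<bar>)) \<partial>PM)
     \<le> 2 * \<delta> * (\<Sum>i<d. \<sigma> i) * lag_weight \<beta> / (real k + 1)"
proof -
  have inner: "(\<integral>\<omega>. (\<Sum>i<d. \<bar>noise j \<omega> i\<bar>) \<partial>PM) = (\<Sum>i<d. (\<integral>\<omega>. \<bar>noise j \<omega> i\<bar> \<partial>PM))"
    and inner_int: "integrable PM (\<lambda>\<omega>. \<Sum>i<d. \<bar>noise j \<omega> i\<bar>)" for j
    using noise_abs_integral_le(1)
    by (auto intro!: Bochner_Integration.integral_sum Bochner_Integration.integrable_sum)
  have "(\<integral>\<omega>. (\<Sum>t\<le>k. \<beta>^t * (\<Sum>i<d. \<bar>noise (k - t) \<omega> i\<bar>)) \<partial>PM)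
      = (\<Sum>t\<le>k. (\<integral>\<omega>. \<beta>^t * (\<Sum>i<d. \<bar>noise (k - t) \<omega> i\<bar>) \<partial>PM))"
    by (intro Bochner_Integration.integral_sum integrable_mult_right inner_int)
  then have "(\<integral>\<omega>. 2 * stepsize k * (\<Sum>t\<le>k. \<beta>^t * (\<Sum>i<d. \<bar>noise (k - t) \<omega> i\<bar>)) \<partial>PM)
      = 2 * stepsize k * (\<Sum>t\<le>k. \<beta>^t * (\<Sum>i<d. (\<integral>\<omega>. \<bar>noise (k - t) \<omega> i\<bar> \<partial>PM)))"
    by (simp add: inner)
  also have "\<dots> \<le> 2 * stepsize k * (\<Sum>t\<le>k. \<beta>^t * ((\<Sum>i<d. \<sigma> i) / sqrt (real (k - t) + 1)))"
  proof (intro mult_left_mono sum_mono)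
    fix t
    have "(\<Sum>i<d. (\<integral>\<omega>. \<bar>noise (k - t) \<omega> i\<bar> \<partial>PM)) \<le> (\<Sum>i<d. \<sigma> i / sqrt (real (k - t + 1)))"
      using noise_abs_integral_le(2) by (intro sum_mono) auto
    then show "(\<Sum>i<d. (\<integral>\<omega>. \<bar>noise (k - t) \<omega> i\<bar> \<partial>PM)) \<le> (\<Sum>i<d. \<sigma> i) / sqrt (real (k - t) + 1)"
      by (simp add: sum_divide_distrib add.commute)
  qed (use stepsize_nonneg beta_pos in auto)
  also have "\<dots> \<le> 2 * \<delta> * (\<Sum>i<d. \<sigma> i) * lag_weight \<beta> / (real k + 1)"
    by (rule noise_weight_le[OF sigma_sum_nonneg])
  finally show ?thesis .
qed

lemma expected_descent:
  assumes "C \<le> k"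
  shows "stepsize k * expected_grad_norm k
    \<le> expected_f k - expected_f (Suc k) + descent_const / (real k + 1)"
proof -
  define Z where "Z \<omega> = 2 * stepsize k * (\<Sum>t\<le>k. \<beta>^t * (\<Sum>i<d. \<bar>noise (k - t) \<omega> i\<bar>))" for \<omega>
  define D where "D = \<delta>\<^sup>2 * Ltot * (6 * lag_weight \<beta> + 1/2) / (real k + 1)"
  have Z_int: "integrable PM Z"
    unfolding Z_def using noise_abs_integral_le(1)
    by (intro integrable_mult_right Bochner_Integration.integrable_sum) auto
  have rhs_int: "integrable PM (\<lambda>\<omega>. f (X k \<omega>) - stepsize k * l1norm d (g (X k \<omega>)) + D + Z \<omega>)"
    by (intro Bochner_Integration.integrable_add Bochner_Integration.integrable_diff
        integrable_mult_right PM.integrable_const integrable_comp_X Z_int)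
  have "f (X (Suc k) \<omega>) \<le> f (X k \<omega>) - stepsize k * l1norm d (g (X k \<omega>)) + D + Z \<omega>" for \<omega>
    using descent_step[OF assms, of \<omega>] by (simp add: D_def Z_def)
  then have "expected_f (Suc k)
      \<le> (\<integral>\<omega>. f (X k \<omega>) - stepsize k * l1norm d (g (X k \<omega>)) + D + Z \<omega> \<partial>PM)"
    unfolding expected_f_def using integrable_comp_X rhs_int by (intro integral_mono) auto
  also have "\<dots> = expected_f k - stepsize k * expected_grad_norm k + D + (\<integral>\<omega>. Z \<omega> \<partial>PM)"
    using integrable_comp_X[of f k] integrable_comp_X[of "\<lambda>x. l1norm d (g x)" k] Z_int
    by (simp add: expected_f_def expected_grad_norm_def PM.prob_space)
  also have "(\<integral>\<omega>. Z \<omega> \<partial>PM) \<le> 2 * \<delta> * (\<Sum>i<d. \<sigma> i) * lag_weight \<beta> / (real k + 1)"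
    unfolding Z_def by (rule expected_noise_le)
  finally show ?thesis by (simp add: D_def descent_const_def add_divide_distrib)
qed

lemma sum_expected_grad_norm_le:
  assumes "C < K"
  shows "(\<Sum>k\<in>{C..<K}. expected_grad_norm k)
    \<le> sqrt (real K) / \<delta> * (expected_f C - expected_f K + descent_const * harm K)"
proof -
  have weight: "expected_grad_norm k \<le> sqrt (real K) / \<delta> * (stepsize k * expected_grad_norm k)"
    if "k < K" for k
  proof -
    have "sqrt (real k + 1) \<le> sqrt (real K)" using that by simp
    then have "1 \<le> sqrt (real K) / \<delta> * stepsize k"
      using delta_pos by (simp add: stepsize_def add.commute)
    then have "1 * expected_grad_norm k \<le> (sqrt (real K) / \<delta> * stepsize k) * expected_grad_norm k"
      by (rule mult_right_mono[OF _ expected_grad_norm_nonneg])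
    then show ?thesis by (simp only: mult_1_left mult.assoc)
  qed
  have telescope: "(\<Sum>k\<in>{C..<K}. stepsize k * expected_grad_norm k)
      \<le> expected_f C - expected_f K + descent_const * harm K"
  proof -
    have "(\<Sum>k\<in>{C..<K}. expected_f (Suc k) - expected_f k) = expected_f K - expected_f C"
      using assms by (intro sum_Suc_diff') simp
    then have "(\<Sum>k\<in>{C..<K}. expected_f k - expected_f (Suc k) + descent_const / (real k + 1))
        = expected_f C - expected_f K + descent_const * (\<Sum>k\<in>{C..<K}. 1 / (real k + 1))"
      unfolding sum.distrib sum_subtractf sum_distrib_left by simp
    moreover have "(\<Sum>k\<in>{C..<K}. stepsize k * expected_grad_norm k)
        \<le> (\<Sum>k\<in>{C..<K}. expected_f k - expected_f (Suc k) + descent_const / (real k + 1))"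
      using expected_descent by (intro sum_mono) auto
    moreover have "descent_const * (\<Sum>k\<in>{C..<K}. 1 / (real k + 1)) \<le> descent_const * harm K"
      using sum_inverse_le_harm descent_const_nonneg by (rule mult_left_mono)
    ultimately show ?thesis by linarith
  qed
  have "(\<Sum>k\<in>{C..<K}. expected_grad_norm k)
      \<le> (\<Sum>k\<in>{C..<K}. sqrt (real K) / \<delta> * (stepsize k * expected_grad_norm k))"
    using weight by (intro sum_mono) auto
  also have "\<dots> = sqrt (real K) / \<delta> * (\<Sum>k\<in>{C..<K}. stepsize k * expected_grad_norm k)"
    by (rule sum_distrib_left[symmetric])
  also have "\<dots> \<le> sqrt (real K) / \<delta> * (expected_f C - expected_f K + descent_const * harm K)"
    using telescope delta_pos by (intro mult_left_mono) auto
  finally show ?thesis .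
qed

lemma descent_const_le:
  assumes "(6 * lag_weight \<beta> + 1/2) * (1 - \<beta>) \<le> c" "2 * lag_weight \<beta> \<le> c * sqrt (1 - \<beta>)"
  shows "descent_const \<le> \<delta> * c * (\<delta> * Ltot / (1 - \<beta>) + (\<Sum>i<d. \<sigma> i) * sqrt (1 - \<beta>))"
proof -
  have "6 * lag_weight \<beta> + 1/2 \<le> c / (1 - \<beta>)"
    using assms(1) beta_less_one by (simp add: pos_le_divide_eq)
  from mult_left_mono[OF this, of "\<delta>\<^sup>2 * Ltot"]
  have "\<delta>\<^sup>2 * Ltot * (6 * lag_weight \<beta> + 1/2) \<le> \<delta> * c * (\<delta> * Ltot / (1 - \<beta>))"
    using Ltot_nonneg delta_pos by (simp add: power2_eq_square mult_ac)
  moreover have "2 * \<delta> * (\<Sum>i<d. \<sigma> i) * lag_weight \<beta> \<le> \<delta> * c * ((\<Sum>i<d. \<sigma> i) * sqrt (1 - \<beta>))"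
    using mult_left_mono[OF assms(2), of "\<delta> * (\<Sum>i<d. \<sigma> i)"] sigma_sum_nonneg delta_pos
    by (simp add: mult_ac)
  ultimately show ?thesis unfolding descent_const_def by (simp add: distrib_left)
qed

lemma signum_rate:
  assumes fstar: "\<forall>x\<in>supp_vec d. fstar \<le> f x" and K: "2 * C + 1 \<le> K"
    and c: "1 \<le> c" "(6 * lag_weight \<beta> + 1/2) * (1 - \<beta>) \<le> c" "2 * lag_weight \<beta> \<le> c * sqrt (1 - \<beta>)"
  shows "(\<integral>\<omega>. 1 / (real K - real C) * (\<Sum>k\<in>{C..<K}. l1norm d (g (X k \<omega>))) \<partial>PM)\<^sup>2
    \<le> 4 * c\<^sup>2 / sqrt (real (\<Sum>k<K. k + 1)) *
      (((\<integral>\<omega>. f (X C \<omega>) \<partial>PM) - fstar) / \<delta> + (1 + ln (real (\<Sum>k<K. k + 1))) *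
        (\<delta> * Ltot / (1 - \<beta>) + (\<Sum>i<d. \<sigma> i) * sqrt (1 - \<beta>)))\<^sup>2"
proof -
  define n where "n = real (\<Sum>k<K. k + 1)"
  define V where "V = \<delta> * Ltot / (1 - \<beta>) + (\<Sum>i<d. \<sigma> i) * sqrt (1 - \<beta>)"
  define R where "R = (expected_f C - fstar) / \<delta> + (1 + ln n) * V"
  have n: "real K \<le> n" "sqrt n \<le> real K" "1 \<le> n"
    using sum_Suc_bounds[of K] K unfolding n_def by auto
  have f_gap: "0 \<le> (expected_f C - fstar) / \<delta>"
    using expected_f_lower_bound[OF fstar, of C] delta_pos by simp
  have "harm K \<le> 1 + ln (real K)" using K by (intro harm_le_one_plus_ln) simp
  also have "ln (real K) \<le> ln n" using K n by (intro ln_mono) auto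
  finally have harm: "harm K \<le> 1 + ln n" by simp
  have const: "descent_const \<le> \<delta> * c * V"
    unfolding V_def by (rule descent_const_le[OF c(2,3)])
  have "descent_const * harm K \<le> (\<delta> * c * V) * (1 + ln n)"
    using const harm descent_const_nonneg harm_nonneg[where 'a = real]
    by (intro mult_mono order_trans[OF descent_const_nonneg const])
  then have "expected_f C - expected_f K + descent_const * harm K \<le> expected_f C - fstar + \<delta> * c * V * (1 + ln n)"
    using expected_f_lower_bound[OF fstar, of K] by linarith
  from mult_left_mono[OF this, of "sqrt (real K) / \<delta>"]
  have "(\<Sum>k\<in>{C..<K}. expected_grad_norm k) \<le> sqrt (real K) / \<delta> * (expected_f C - fstar + \<delta> * c * V * (1 + ln n))"
    using sum_expected_grad_norm_le[of K] K delta_pos by simp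
  also have "\<dots> = sqrt (real K) * ((expected_f C - fstar) / \<delta> + c * V * (1 + ln n))"
    using delta_pos by (simp add: field_simps)
  also have "\<dots> \<le> sqrt (real K) * (c * R)"
  proof (rule mult_left_mono)
    have "(expected_f C - fstar) / \<delta> \<le> c * ((expected_f C - fstar) / \<delta>)"
      using mult_right_mono[OF c(1) f_gap] by simp
    moreover have "c * R = c * ((expected_f C - fstar) / \<delta>) + c * V * (1 + ln n)"
      unfolding R_def by (simp add: algebra_simps)
    ultimately show "(expected_f C - fstar) / \<delta> + c * V * (1 + ln n) \<le> c * R" by linarith
  qed simp
  finally have sum_bound: "(\<Sum>k\<in>{C..<K}. expected_grad_norm k) \<le> sqrt (real K) * (c * R)" .
  have "(\<integral>\<omega>. (\<Sum>k\<in>{C..<K}. l1norm d (g (X k \<omega>))) \<partial>PM) = (\<Sum>k\<in>{C..<K}. expected_grad_norm k)"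
    unfolding expected_grad_norm_def by (rule Bochner_Integration.integral_sum) (rule integrable_comp_X)
  then have "(\<integral>\<omega>. 1 / (real K - real C) * (\<Sum>k\<in>{C..<K}. l1norm d (g (X k \<omega>))) \<partial>PM)
      = (\<Sum>k\<in>{C..<K}. expected_grad_norm k) / (real K - real C)"
    by simp
  also have "(\<dots>)\<^sup>2 \<le> 4 / sqrt n * (c * R)\<^sup>2"
    using sum_bound K n by (intro square_of_average_le sum_nonneg expected_grad_norm_nonneg) auto
  also have "\<dots> = 4 * c\<^sup>2 / sqrt n * R\<^sup>2"
    by (simp add: power_mult_distrib)
  finally show ?thesis unfolding n_def R_def V_def expected_f_def .
qed

end

theorem theorem3:
  fixes \<beta> :: real
  assumes "0 < \<beta>" and "\<beta> < 1"
  shows "\<exists>A>0. \<exists>K0::nat.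
   \<forall>(d::nat) (f::(nat \<Rightarrow> real) \<Rightarrow> real) (g::(nat \<Rightarrow> real) \<Rightarrow> (nat \<Rightarrow> real))
    (L::nat \<Rightarrow> real) (\<sigma>::nat \<Rightarrow> real) (fstar::real) (N::real measure)
    (G::(nat \<Rightarrow> real) \<Rightarrow> real \<Rightarrow> (nat \<Rightarrow> real)) (\<delta>::real) (x0::nat \<Rightarrow> real) (K::nat).
     (\<forall>x\<in>supp_vec d. fstar \<le> f x) \<and>
     (\<forall>i<d. 0 \<le> L i) \<and>
     (\<forall>x\<in>supp_vec d. \<forall>y\<in>supp_vec d.
        \<bar>f y - f x - (\<Sum>i<d. g x i * (y i - x i))\<bar> \<le> 1 / 2 * (\<Sum>i<d. L i * (y i - x i)\<^sup>2)) \<and>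
     C2_with_grad d f g \<and>
     prob_space N \<and>
     (\<forall>i<d. (\<lambda>p. G (fst p) (snd p) i) \<in> borel_measurable (borel \<Otimes>\<^sub>M N)) \<and>
     (\<forall>x\<in>supp_vec d. \<forall>i<d. integrable N (\<lambda>u. G x u i) \<and> (\<integral>u. G x u i \<partial>N) = g x i) \<and>
     (\<forall>i<d. 0 \<le> \<sigma> i) \<and>
     (\<forall>x\<in>supp_vec d. \<forall>i<d. integrable N (\<lambda>u. (G x u i - g x i)\<^sup>2) \<and>
        (\<integral>u. (G x u i - g x i)\<^sup>2 \<partial>N) \<le> (\<sigma> i)\<^sup>2) \<and>
     0 < \<delta> \<and> x0 \<in> supp_vec d \<and> K0 \<le> K
     \<longrightarrow>
     (let M = Pi\<^sub>M UNIV (\<lambda>_::nat \<times> nat. N);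
          C = signum_C \<beta>;
          xk = signum_x d \<beta> \<delta> G x0;
          Ncalls = real (\<Sum>k<K. k + 1);
          fC = (\<integral>\<omega>. f (xk C \<omega>) \<partial>M)
      in (\<integral>\<omega>. 1 / (real K - real C) * (\<Sum>k\<in>{C..<K}. l1norm d (g (xk k \<omega>))) \<partial>M)\<^sup>2
         \<le> A / sqrt Ncalls *
            ((fC - fstar) / \<delta> + (1 + ln Ncalls) *
               (\<delta> * (\<Sum>i<d. L i) / (1 - \<beta>) + (\<Sum>i<d. \<sigma> i) * sqrt (1 - \<beta>)))\<^sup>2)"
proof -
  define c where "c = max 1 (max ((6 * lag_weight \<beta> + 1/2) * (1 - \<beta>)) (2 * lag_weight \<beta> / sqrt (1 - \<beta>)))"
  have c: "1 \<le> c" "(6 * lag_weight \<beta> + 1/2) * (1 - \<beta>) \<le> c" "2 * lag_weight \<beta> \<le> c * sqrt (1 - \<beta>)"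
  proof -
    have "2 * lag_weight \<beta> / sqrt (1 - \<beta>) \<le> c" by (simp add: c_def)
    then show "2 * lag_weight \<beta> \<le> c * sqrt (1 - \<beta>)" using assms by (simp add: pos_divide_le_eq)
  qed (simp_all add: c_def)
  show ?thesis
  proof (intro exI[of _ "4 * c\<^sup>2"] exI[of _ "2 * signum_C \<beta> + 1"] conjI allI impI, goal_cases)
    case 1
    show ?case using c by simp
  next
    case (2 d f g L \<sigma> fstar N G \<delta> x0 K)
    interpret S: signum_stochastic d f g L G \<beta> \<delta> "signum_C \<beta>" x0 N \<sigma>
      using 2 assms unfolding signum_stochastic_def signum_path_def signum_stochastic_axioms_def
      by (elim conjE) (intro conjI; assumption)
    have "signum_x d \<beta> \<delta> G x0 = S.X" by (simp add: fun_eq_iff S.X_def signum_x_def)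
    moreover have "\<forall>x\<in>supp_vec d. fstar \<le> f x" "2 * signum_C \<beta> + 1 \<le> K" using 2 by auto
    ultimately show ?case unfolding Let_def using S.signum_rate[OF _ _ c] by simp
  qed
qed

end
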